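(* Let $\mathcal{C}$ be an exact-repair regenerating code with parameters $\{(n,k,d)=(4,3,3),(\alpha,\beta),B\}$. If $\frac{3}{2}\beta<\alpha<3\beta$, then $$3B\le 4\alpha+6\beta .$$
   Context: An exact-repair regenerating code with parameters $\{(n,k,d),(\alpha,\beta),B\}$: a file $M$ uniformly distributed over $\mathbb{F}_q^B$ (entropies measured in units of $\log q$); node $i\in[n]$ stores $W_i$, a deterministic function of $M$, with $H(W_i)\le\alpha$; (data collection) for every $K\subseteq[n]$ with $|K|=k$, $M$ is a function of $(W_a)_{a\in K}$; (exact repair) for every node $y$ and every set $D\subseteq[n]\setminus\{y\}$ with $|D|=d$, each $x\in D$ sends helper data, a deterministic function of $W_x$ of entropy at most $\beta$, from which $W_y$ is exactly recoverable. *)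

theory Defs
  imports Complex_Main "HOL-Library.FuncSet"
begin

definition file_space :: "nat \<Rightarrow> (nat \<Rightarrow> 'a::{finite,field}) set" where
  "file_space B = PiE {..<B} (\<lambda>_. UNIV)"

definition unif_entropy :: "real \<Rightarrow> 'm set \<Rightarrow> ('m \<Rightarrow> 'v) \<Rightarrow> real" where
  "unif_entropy b S f =
     (\<Sum>y\<in>f ` S. let p = real (card {x\<in>S. f x = y}) / real (card S) in - p * log b p)"

text \<open>Entropy in units of log q, with M uniform over F_q^B.\<close>
definition Hq :: "nat \<Rightarrow> ((nat \<Rightarrow> 'a::{finite,field}) \<Rightarrow> 'v) \<Rightarrow> real" where
  "Hq B f = unif_entropy (real (card (UNIV :: 'a set))) (file_space B :: (nat \<Rightarrow> 'a) set) f"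

text \<open>Nodes are 1..n; W i is the (deterministic) content of node i as a function of the file;
  h y D x is the helper function node x applies to its content when repairing node y
  with helper set D.\<close>
definition exact_repair_code ::
  "nat \<Rightarrow> nat \<Rightarrow> nat \<Rightarrow> real \<Rightarrow> real \<Rightarrow> nat \<Rightarrow>
   (nat \<Rightarrow> (nat \<Rightarrow> 'a::{finite,field}) \<Rightarrow> 'w) \<Rightarrow>
   (nat \<Rightarrow> nat set \<Rightarrow> nat \<Rightarrow> 'w \<Rightarrow> 'h) \<Rightarrow> bool" where
  "exact_repair_code n k d \<alpha> \<beta> B W h \<longleftrightarrow>
     (\<forall>i\<in>{1..n}. Hq B (W i) \<le> \<alpha>) \<and>
     (\<forall>K. K \<subseteq> {1..n} \<and> card K = k \<longrightarrow>
        (\<exists>g. \<forall>m\<in>file_space B. g (\<lambda>a\<in>K. W a m) = m)) \<and>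
     (\<forall>y\<in>{1..n}. \<forall>D. D \<subseteq> {1..n} - {y} \<and> card D = d \<longrightarrow>
        (\<forall>x\<in>D. Hq B (\<lambda>m. h y D x (W x m)) \<le> \<beta>) \<and>
        (\<exists>g. \<forall>m\<in>file_space B. g (\<lambda>x\<in>D. h y D x (W x m)) = W y m))"

end

theory Submission
  imports Defs
begin

text \<open>Write \<open>N\<^sub>i\<close> for node \<open>i\<close> together with all helper data it can send, and
  \<open>S\<^sub>i\<^sub>j\<close> for the helper data node \<open>i\<close> sends to repair node \<open>j\<close>. Joint entropies of sets
  of these symbols form a submodular function, and any set that determines three nodes has
  entropy \<open>B\<close>. The set \<open>{W\<^sub>i, S\<^sub>x\<^sub>j, S\<^sub>y\<^sub>j}\<close> already determines \<open>N\<^sub>i \<union> N\<^sub>j\<close>, because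
  \<open>N\<^sub>i\<close> supplies the third helper of node \<open>j\<close>; so this closure has entropy at most
  \<open>\<alpha> + 2\<beta>\<close>. Three instances of submodularity with such closures give, for every ordering
  \<open>a, b, c, d\<close> of the nodes,
  \<open>3B + H(S\<^sub>b\<^sub>a) \<le> 4\<alpha> + 6\<beta> + H(S\<^sub>c\<^sub>d)\<close>,
  and adding the same inequality for the reversed ordering cancels the helper terms.\<close>

section \<open>Entropy of functions of a uniform random variable\<close>

definition fiber :: "'m set \<Rightarrow> ('m \<Rightarrow> 'v) \<Rightarrow> 'm \<Rightarrow> 'm set" where
  "fiber S f m = {x\<in>S. f x = f m}"

lemma finite_fiber: "finite S \<Longrightarrow> finite (fiber S f m)"
  unfolding fiber_def by simp

lemma mem_fiber_self: "m \<in> S \<Longrightarrow> m \<in> fiber S f m"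
  unfolding fiber_def by simp

lemma card_fiber_pos: "finite S \<Longrightarrow> m \<in> S \<Longrightarrow> 0 < card (fiber S f m)"
  using finite_fiber mem_fiber_self card_gt_0_iff by fastforce

lemma card_fiber_le: "finite S \<Longrightarrow> card (fiber S f m) \<le> card S"
  unfolding fiber_def by (intro card_mono) auto

lemma fiber_eq: "m' \<in> fiber S f m \<Longrightarrow> fiber S f m' = fiber S f m"
  unfolding fiber_def by auto

lemma unif_entropy_eq_average:
  assumes S: "finite S" "S \<noteq> {}" and b: "b > 1"
  shows "unif_entropy b S f = (\<Sum>m\<in>S. log b (card S) - log b (card (fiber S f m))) / card S"
proof -
  have N: "real (card S) > 0" using S by (simp add: card_gt_0_iff)
  have per_fiber: "- (real (card (fiber S f m)) / card S) * log b (real (card (fiber S f m)) / card S)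
      = (\<Sum>x\<in>fiber S f m. log b (card S) - log b (card (fiber S f x))) / card S"
    if m: "m \<in> S" for m
  proof -
    have pos: "real (card (fiber S f m)) > 0" using card_fiber_pos[OF S(1) m] by simp
    have "(\<Sum>x\<in>fiber S f m. log b (card S) - log b (card (fiber S f x)))
        = card (fiber S f m) * (log b (card S) - log b (card (fiber S f m)))"
      by (simp add: fiber_eq)
    then show ?thesis using pos N b by (simp only:) (simp add: log_divide field_simps)
  qed
  have "unif_entropy b S f
      = (\<Sum>y\<in>f ` S. (\<Sum>x\<in>{x\<in>S. f x = y}. log b (card S) - log b (card (fiber S f x))) / card S)"
    unfolding unif_entropy_def Let_def
  proof (rule sum.cong[OF refl])
    fix y assume "y \<in> f ` S"
    then obtain m where m: "m \<in> S" and "{x\<in>S. f x = y} = fiber S f m" by (auto simp: fiber_def)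
    then show "- (real (card {x\<in>S. f x = y}) / card S) * log b (real (card {x\<in>S. f x = y}) / card S)
        = (\<Sum>x\<in>{x\<in>S. f x = y}. log b (card S) - log b (card (fiber S f x))) / card S"
      using per_fiber[OF m] by simp
  qed
  also have "\<dots> = (\<Sum>m\<in>S. log b (card S) - log b (card (fiber S f m))) / card S"
    by (simp add: sum_divide_distrib[symmetric] sum.image_gen[OF S(1), symmetric])
  finally show ?thesis .
qed

lemma unif_entropy_le_if_factors:
  assumes S: "finite S" "S \<noteq> {}" and b: "b > 1"
    and factors: "\<forall>x\<in>S. \<forall>y\<in>S. g x = g y \<longrightarrow> f x = f y"
  shows "unif_entropy b S f \<le> unif_entropy b S g"
proof -
  have "log b (card S) - log b (card (fiber S f m)) \<le> log b (card S) - log b (card (fiber S g m))"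
    if m: "m \<in> S" for m
  proof -
    have "fiber S g m \<subseteq> fiber S f m" unfolding fiber_def using factors m by blast
    then have "real (card (fiber S g m)) \<le> card (fiber S f m)"
      by (simp add: card_mono finite_fiber S(1))
    moreover have "0 < real (card (fiber S g m))" using card_fiber_pos[OF S(1) m] by simp
    ultimately show ?thesis using b by simp
  qed
  then have "(\<Sum>m\<in>S. log b (card S) - log b (card (fiber S f m)))
      \<le> (\<Sum>m\<in>S. log b (card S) - log b (card (fiber S g m)))"
    by (rule sum_mono)
  then show ?thesis unfolding unif_entropy_eq_average[OF S b] by (rule divide_right_mono) simp
qed

lemma unif_entropy_nonneg:
  assumes S: "finite S" "S \<noteq> {}" and b: "b > 1"
  shows "0 \<le> unif_entropy b S f"
proof -
  have "0 \<le> log b (card S) - log b (card (fiber S f m))" if m: "m \<in> S" for m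
  proof -
    have "real (card (fiber S f m)) \<le> card S" using card_fiber_le[OF S(1)] by simp
    moreover have "0 < real (card (fiber S f m))" using card_fiber_pos[OF S(1) m] by simp
    ultimately show ?thesis using b by simp
  qed
  then show ?thesis unfolding unif_entropy_eq_average[OF S b] by (simp add: sum_nonneg)
qed

lemma unif_entropy_inj_on:
  assumes S: "finite S" "S \<noteq> {}" and b: "b > 1" and inj: "inj_on f S"
  shows "unif_entropy b S f = log b (card S)"
proof -
  have "card (fiber S f m) = 1" if "m \<in> S" for m
  proof -
    have "fiber S f m = {m}" using inj that by (auto simp: fiber_def inj_on_def)
    then show ?thesis by simp
  qed
  then have "(\<Sum>m\<in>S. log b (card S) - log b (card (fiber S f m))) = card S * log b (card S)"
    by simp
  then show ?thesis
    unfolding unif_entropy_eq_average[OF S b] using S by (simp add: card_gt_0_iff)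
qed

lemma log_le_minus_one_div_ln:
  assumes "x > 0" "b > 1" shows "log b x \<le> (x - 1) / ln b"
proof -
  have "ln x \<le> x - 1" using assms(1) by (rule ln_le_minus_one)
  moreover have "0 \<le> ln b" using assms(2) by simp
  ultimately show ?thesis unfolding log_def by (rule divide_right_mono)
qed

lemma sum_fiber_inter_le:
  assumes S: "finite S" and x: "x \<in> S" and y: "y \<in> S"
    and ka: "\<forall>u\<in>S. \<forall>v\<in>S. a u = a v \<longrightarrow> k u = k v"
    and kb: "\<forall>u\<in>S. \<forall>v\<in>S. b u = b v \<longrightarrow> k u = k v"
  shows "(\<Sum>m\<in>fiber S a x \<inter> fiber S b y.
            1 / (real (card (fiber S a m \<inter> fiber S b m)) * card (fiber S k m)))
         \<le> (if y \<in> fiber S k x then 1 / real (card (fiber S k x)) else 0)"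
proof (cases "fiber S a x \<inter> fiber S b y = {}")
  case False
  let ?I = "fiber S a x \<inter> fiber S b y"
  have fibers: "fiber S a m = fiber S a x" "fiber S b m = fiber S b y" "fiber S k m = fiber S k x"
    if "m \<in> ?I" for m
  proof -
    have m: "m \<in> S" "a m = a x" "b m = b y" using that by (simp_all add: fiber_def)
    then have "k m = k x" using ka x by blast
    then show "fiber S a m = fiber S a x" "fiber S b m = fiber S b y" "fiber S k m = fiber S k x"
      using m by (auto simp: fiber_def)
  qed
  obtain z where z: "z \<in> ?I" using False by blast
  then have "z \<in> S" "a z = a x" "b z = b y" by (simp_all add: fiber_def)
  then have "k z = k x" "k z = k y" using ka kb x y by blast+
  then have "y \<in> fiber S k x" using y by (simp add: fiber_def)
  moreover have "card ?I > 0" using False by (simp add: card_gt_0_iff finite_fiber S)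
  moreover have "(\<Sum>m\<in>?I. 1 / (real (card (fiber S a m \<inter> fiber S b m)) * card (fiber S k m)))
      = (\<Sum>m\<in>?I. 1 / (real (card ?I) * card (fiber S k x)))"
  proof (rule sum.cong[OF refl])
    fix m assume "m \<in> ?I"
    from fibers[OF this] show "1 / (real (card (fiber S a m \<inter> fiber S b m)) * card (fiber S k m))
        = 1 / (real (card ?I) * card (fiber S k x))" by (simp only:)
  qed
  ultimately show ?thesis by simp
qed simp

lemma sum_fiber_ratio_le:
  assumes S: "finite S"
    and ka: "\<forall>u\<in>S. \<forall>v\<in>S. a u = a v \<longrightarrow> k u = k v"
    and kb: "\<forall>u\<in>S. \<forall>v\<in>S. b u = b v \<longrightarrow> k u = k v"
  shows "(\<Sum>m\<in>S. real (card (fiber S a m)) * card (fiber S b m)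
            / (real (card (fiber S a m \<inter> fiber S b m)) * card (fiber S k m))) \<le> card S"
proof -
  let ?w = "\<lambda>m. 1 / (real (card (fiber S a m \<inter> fiber S b m)) * card (fiber S k m))"
  let ?P = "\<lambda>m. {p\<in>S \<times> S. fst p \<in> fiber S a m \<and> snd p \<in> fiber S b m}"
  have "(\<Sum>m\<in>S. real (card (fiber S a m)) * card (fiber S b m)
            / (real (card (fiber S a m \<inter> fiber S b m)) * card (fiber S k m)))
      = (\<Sum>m\<in>S. \<Sum>p\<in>?P m. ?w m)"
  proof (rule sum.cong[OF refl])
    fix m
    have "?P m = fiber S a m \<times> fiber S b m" by (auto simp: fiber_def)
    then show "real (card (fiber S a m)) * card (fiber S b m)
            / (real (card (fiber S a m \<inter> fiber S b m)) * card (fiber S k m))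
        = (\<Sum>p\<in>?P m. ?w m)"
      by (simp add: card_cartesian_product)
  qed
  also have "\<dots> = (\<Sum>p\<in>S \<times> S. \<Sum>m\<in>{m\<in>S. fst p \<in> fiber S a m \<and> snd p \<in> fiber S b m}. ?w m)"
    using S by (intro sum.swap_restrict) auto
  also have "\<dots> \<le> (\<Sum>p\<in>S \<times> S. if snd p \<in> fiber S k (fst p) then 1 / real (card (fiber S k (fst p))) else 0)"
  proof (rule sum_mono)
    fix p assume "p \<in> S \<times> S"
    then obtain x y where p: "p = (x, y)" and xy: "x \<in> S" "y \<in> S" by blast
    have pairs: "{m\<in>S. x \<in> fiber S a m \<and> y \<in> fiber S b m} = fiber S a x \<inter> fiber S b y"
      using xy by (auto simp: fiber_def)
    show "(\<Sum>m\<in>{m\<in>S. fst p \<in> fiber S a m \<and> snd p \<in> fiber S b m}. ?w m)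
        \<le> (if snd p \<in> fiber S k (fst p) then 1 / real (card (fiber S k (fst p))) else 0)"
      unfolding p fst_conv snd_conv pairs by (rule sum_fiber_inter_le[OF S xy ka kb])
  qed
  also have "\<dots> = (\<Sum>x\<in>S. \<Sum>y\<in>S. if y \<in> fiber S k x then 1 / real (card (fiber S k x)) else 0)"
    by (simp add: sum.cartesian_product split_def)
  also have "\<dots> = (\<Sum>x\<in>S. 1)"
  proof (rule sum.cong[OF refl])
    fix x assume "x \<in> S"
    then have "card (fiber S k x) > 0" by (rule card_fiber_pos[OF S])
    moreover have "(\<Sum>y\<in>S. if y \<in> fiber S k x then c else 0) = card (fiber S k x) * c" for c :: real
      using S by (simp add: sum.If_cases fiber_def Int_def)
    ultimately show "(\<Sum>y\<in>S. if y \<in> fiber S k x then 1 / real (card (fiber S k x)) else 0) = 1"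
      by simp
  qed
  also have "\<dots> = card S" by simp
  finally show ?thesis .
qed

text \<open>With \<open>r m = |A m| |B m| / (|A m \<inter> B m| |K m|)\<close> for the fibres of \<open>a, b, k\<close> through \<open>m\<close>,
  the entropy deficit is the average of \<open>log r\<close>; it is nonpositive because \<open>log r \<le> (r - 1) / ln b\<close>
  and the \<open>r m\<close> sum to at most \<open>|S|\<close> by double counting.\<close>
lemma unif_entropy_submodular:
  assumes S: "finite S" "S \<noteq> {}" and base: "bb > 1"
    and c: "\<forall>x\<in>S. \<forall>y\<in>S. c x = c y \<longleftrightarrow> a x = a y \<and> b x = b y"
    and ka: "\<forall>x\<in>S. \<forall>y\<in>S. a x = a y \<longrightarrow> k x = k y"
    and kb: "\<forall>x\<in>S. \<forall>y\<in>S. b x = b y \<longrightarrow> k x = k y"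
  shows "unif_entropy bb S c + unif_entropy bb S k \<le> unif_entropy bb S a + unif_entropy bb S b"
proof -
  define r where "r m = real (card (fiber S a m)) * card (fiber S b m)
    / (real (card (fiber S c m)) * card (fiber S k m))" for m
  have fiber_c: "fiber S c m = fiber S a m \<inter> fiber S b m" if "m \<in> S" for m
    using c that unfolding fiber_def by blast
  have log_r: "log bb (r m) = log bb (card (fiber S a m)) + log bb (card (fiber S b m))
      - log bb (card (fiber S c m)) - log bb (card (fiber S k m))" if m: "m \<in> S" for m
    using card_fiber_pos[OF S(1) m, of a] card_fiber_pos[OF S(1) m, of b]
      card_fiber_pos[OF S(1) m, of c] card_fiber_pos[OF S(1) m, of k] base
    by (simp add: r_def log_divide log_mult)
  have r_pos: "r m > 0" if m: "m \<in> S" for m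
    using card_fiber_pos[OF S(1) m, of a] card_fiber_pos[OF S(1) m, of b]
      card_fiber_pos[OF S(1) m, of c] card_fiber_pos[OF S(1) m, of k]
    by (simp add: r_def)
  have "(\<Sum>m\<in>S. log bb (r m)) \<le> (\<Sum>m\<in>S. (r m - 1) / ln bb)"
    using r_pos base by (intro sum_mono log_le_minus_one_div_ln)
  also have "\<dots> = ((\<Sum>m\<in>S. r m) - card S) / ln bb"
    by (simp add: sum_divide_distrib[symmetric] sum_subtractf)
  also have "\<dots> \<le> 0"
  proof -
    have "(\<Sum>m\<in>S. r m) \<le> card S"
      using sum_fiber_ratio_le[OF S(1) ka kb] by (simp add: r_def fiber_c)
    then show ?thesis using base by (simp add: divide_nonpos_pos)
  qed
  finally have "(\<Sum>m\<in>S. log bb (r m)) \<le> 0" .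
  then show ?thesis
    unfolding unif_entropy_eq_average[OF S base] add_divide_distrib[symmetric]
    by (intro divide_right_mono) (simp_all add: log_r sum_subtractf sum.distrib)
qed

section \<open>Joint entropy of a family of functions\<close>

definition joint_entropy :: "real \<Rightarrow> 'm set \<Rightarrow> ('i \<Rightarrow> 'm \<Rightarrow> 'v) \<Rightarrow> 'i set \<Rightarrow> real" where
  "joint_entropy b S V X = unif_entropy b S (\<lambda>m. \<lambda>i\<in>X. V i m)"

definition determines :: "'m set \<Rightarrow> ('i \<Rightarrow> 'm \<Rightarrow> 'v) \<Rightarrow> 'i set \<Rightarrow> 'i set \<Rightarrow> bool" where
  "determines S V X Y \<longleftrightarrow>
     (\<forall>m\<in>S. \<forall>m'\<in>S. (\<forall>i\<in>X. V i m = V i m') \<longrightarrow> (\<forall>i\<in>Y. V i m = V i m'))"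

lemma restrict_eq_restrict_iff: "(\<lambda>i\<in>X. f i) = (\<lambda>i\<in>X. g i) \<longleftrightarrow> (\<forall>i\<in>X. f i = g i)"
  by (metis restrict_apply' restrict_ext)

lemma determines_subset: "Y \<subseteq> X \<Longrightarrow> determines S V X Y"
  unfolding determines_def by blast

lemma determines_trans: "determines S V X Y \<Longrightarrow> determines S V Y Z \<Longrightarrow> determines S V X Z"
  unfolding determines_def by blast

lemma determines_extend:
  "determines S V X Y \<Longrightarrow> determines S V (X \<union> Y) Z \<Longrightarrow> determines S V X (Y \<union> Z)"
  unfolding determines_def by blast

lemma determines_Un: "determines S V X Y \<Longrightarrow> determines S V X Z \<Longrightarrow> determines S V X (Y \<union> Z)"
  unfolding determines_def by blast

context
  fixes b :: real and S :: "'m set"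
  assumes S: "finite S" "S \<noteq> {}" and base: "b > 1"
begin

lemma joint_entropy_le_if_determines:
  "determines S V Y X \<Longrightarrow> joint_entropy b S V X \<le> joint_entropy b S V Y"
  unfolding joint_entropy_def determines_def
  by (intro unif_entropy_le_if_factors[OF S base]) (unfold restrict_eq_restrict_iff)

lemma joint_entropy_mono: "X \<subseteq> Y \<Longrightarrow> joint_entropy b S V X \<le> joint_entropy b S V Y"
  by (intro joint_entropy_le_if_determines determines_subset)

lemma joint_entropy_nonneg: "0 \<le> joint_entropy b S V X"
  unfolding joint_entropy_def by (rule unif_entropy_nonneg[OF S base])

lemma joint_entropy_submodular:
  "joint_entropy b S V (X \<union> Y) + joint_entropy b S V (X \<inter> Y)
     \<le> joint_entropy b S V X + joint_entropy b S V Y"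
  unfolding joint_entropy_def
  by (rule unif_entropy_submodular[OF S base]; unfold restrict_eq_restrict_iff; blast)

lemma joint_entropy_subadditive:
  "joint_entropy b S V (X \<union> Y) \<le> joint_entropy b S V X + joint_entropy b S V Y"
  using joint_entropy_submodular[of V X Y] joint_entropy_nonneg[of V "X \<inter> Y"] by linarith

end

section \<open>Exact-repair codes with \<open>(n, k, d) = (4, 3, 3)\<close>\<close>

lemma card_field_gt_1: "1 < card (UNIV :: 'a::{finite,field} set)"
proof -
  have "card {0::'a, 1} \<le> card (UNIV :: 'a set)" by (rule card_mono) auto
  then show ?thesis by simp
qed

lemma finite_file_space: "finite (file_space B :: (nat \<Rightarrow> 'a::{finite,field}) set)"
  unfolding file_space_def by (intro finite_PiE) auto

lemma file_space_nonempty: "file_space B \<noteq> {}"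
  unfolding file_space_def by (simp add: PiE_eq_empty_iff)

lemma card_file_space: "card (file_space B :: (nat \<Rightarrow> 'a::{finite,field}) set) = card (UNIV :: 'a set) ^ B"
  unfolding file_space_def by (simp add: card_PiE)

lemma four_nodes:
  assumes "distinct [a, b, c, d]" "{a, b, c, d} \<subseteq> {1..4::nat}"
  shows "{1..4} = {a, b, c, d}"
  using assms by (intro card_subset_eq[symmetric]) auto

text \<open>\<open>Helper i j\<close> is the data node \<open>i\<close> sends when node \<open>j\<close> is repaired. Since \<open>d = n - 1\<close>,
  the helper set of \<open>j\<close> is necessarily \<open>{1..4} - {j}\<close>. The junk symbols in \<open>range (Helper i)\<close>
  are still functions of \<open>W i\<close>, so \<open>node i\<close> has the entropy of \<open>W i\<close>.\<close>
datatype symbol = Stored nat | Helper nat nat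

definition node :: "nat \<Rightarrow> symbol set" where
  "node i = insert (Stored i) (range (Helper i))"

locale exact_repair_433 =
  fixes W :: "nat \<Rightarrow> (nat \<Rightarrow> 'a::{finite,field}) \<Rightarrow> 'w"
    and h :: "nat \<Rightarrow> nat set \<Rightarrow> nat \<Rightarrow> 'w \<Rightarrow> 'h"
    and \<alpha> \<beta> :: real and B :: nat
  assumes code: "exact_repair_code 4 3 3 \<alpha> \<beta> B W h"
begin

fun symbol_value :: "symbol \<Rightarrow> (nat \<Rightarrow> 'a) \<Rightarrow> 'w + 'h" where
  "symbol_value (Stored i) m = Inl (W i m)"
| "symbol_value (Helper i j) m = Inr (h j ({1..4} - {j}) i (W i m))"

definition H :: "symbol set \<Rightarrow> real" where
  "H = joint_entropy (card (UNIV :: 'a set)) (file_space B) symbol_value"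

abbreviation code_determines :: "symbol set \<Rightarrow> symbol set \<Rightarrow> bool" where
  "code_determines \<equiv> determines (file_space B) symbol_value"

lemma code_storage: "i \<in> {1..4} \<Longrightarrow> Hq B (W i) \<le> \<alpha>"
  using code unfolding exact_repair_code_def by blast

lemma code_data_collection:
  "K \<subseteq> {1..4} \<Longrightarrow> card K = 3 \<Longrightarrow> \<exists>g. \<forall>m\<in>file_space B. g (\<lambda>a\<in>K. W a m) = m"
  using code unfolding exact_repair_code_def by blast

lemma code_repair:
  assumes "j \<in> {1..4}"
  shows "\<forall>x\<in>{1..4} - {j}. Hq B (\<lambda>m. h j ({1..4} - {j}) x (W x m)) \<le> \<beta>"
    and "\<exists>g. \<forall>m\<in>file_space B. g (\<lambda>x\<in>{1..4} - {j}. h j ({1..4} - {j}) x (W x m)) = W j m"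
proof -
  have "{1..4} - {j} \<subseteq> {1..4} - {j} \<and> card ({1..4::nat} - {j}) = 3"
    using assms by (simp add: card_Diff_singleton)
  then show "\<forall>x\<in>{1..4} - {j}. Hq B (\<lambda>m. h j ({1..4} - {j}) x (W x m)) \<le> \<beta>"
    and "\<exists>g. \<forall>m\<in>file_space B. g (\<lambda>x\<in>{1..4} - {j}. h j ({1..4} - {j}) x (W x m)) = W j m"
    using code assms unfolding exact_repair_code_def by blast+
qed

lemma q_gt_1: "1 < real (card (UNIV :: 'a set))"
  using card_field_gt_1[where 'a = 'a] by simp

lemma H_le_if_determines: "code_determines Y X \<Longrightarrow> H X \<le> H Y"
  unfolding H_def by (rule joint_entropy_le_if_determines[OF finite_file_space file_space_nonempty q_gt_1])

lemma H_mono: "X \<subseteq> Y \<Longrightarrow> H X \<le> H Y"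
  unfolding H_def by (rule joint_entropy_mono[OF finite_file_space file_space_nonempty q_gt_1])

lemma H_submodular: "H (X \<union> Y) + H (X \<inter> Y) \<le> H X + H Y"
  unfolding H_def by (rule joint_entropy_submodular[OF finite_file_space file_space_nonempty q_gt_1])

lemma H_subadditive: "H (X \<union> Y) \<le> H X + H Y"
  unfolding H_def by (rule joint_entropy_subadditive[OF finite_file_space file_space_nonempty q_gt_1])

lemma determines_node: "code_determines {Stored i} (node i)"
  unfolding determines_def node_def by auto

lemma determines_Stored_by_repair:
  assumes j: "j \<in> {1..4}" and others: "{1..4} - {j} = {x, y, z}"
  shows "code_determines {Helper x j, Helper y j, Helper z j} {Stored j}"
  unfolding determines_def
proof (intro ballI impI)
  fix m m' s assume m: "m \<in> file_space B" "m' \<in> file_space B"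
    and eq: "\<forall>s\<in>{Helper x j, Helper y j, Helper z j}. symbol_value s m = symbol_value s m'"
    and s: "s \<in> {Stored j}"
  obtain g where g: "\<forall>m\<in>file_space B. g (\<lambda>x\<in>{1..4} - {j}. h j ({1..4} - {j}) x (W x m)) = W j m"
    using code_repair(2)[OF j] by blast
  have "(\<lambda>x\<in>{1..4} - {j}. h j ({1..4} - {j}) x (W x m))
      = (\<lambda>x\<in>{1..4} - {j}. h j ({1..4} - {j}) x (W x m'))"
  proof (rule restrict_ext)
    fix i assume "i \<in> {1..4} - {j}"
    then have "Helper i j \<in> {Helper x j, Helper y j, Helper z j}" using others by blast
    then have "symbol_value (Helper i j) m = symbol_value (Helper i j) m'" using eq by blast
    then show "h j ({1..4} - {j}) i (W i m) = h j ({1..4} - {j}) i (W i m')" by simp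
  qed
  then have "W j m = W j m'" using g[rule_format, OF m(1)] g[rule_format, OF m(2)] by simp
  then show "symbol_value s m = symbol_value s m'" using s by simp
qed

lemma H_Stored_le:
  assumes "i \<in> {1..4}" shows "H {Stored i} \<le> \<alpha>"
proof -
  have "H {Stored i} \<le> Hq B (W i)"
    unfolding H_def joint_entropy_def Hq_def
    by (rule unif_entropy_le_if_factors[OF finite_file_space file_space_nonempty q_gt_1])
      (simp add: restrict_eq_restrict_iff)
  also have "\<dots> \<le> \<alpha>" using assms by (rule code_storage)
  finally show ?thesis .
qed

lemma H_node_le: "i \<in> {1..4} \<Longrightarrow> H (node i) \<le> \<alpha>"
  using H_le_if_determines[OF determines_node] H_Stored_le by (rule order_trans)

lemma H_Helper_le:
  assumes "i \<in> {1..4}" "j \<in> {1..4}" "i \<noteq> j"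
  shows "H {Helper i j} \<le> \<beta>"
proof -
  have "H {Helper i j} \<le> Hq B (\<lambda>m. h j ({1..4} - {j}) i (W i m))"
    unfolding H_def joint_entropy_def Hq_def
    by (rule unif_entropy_le_if_factors[OF finite_file_space file_space_nonempty q_gt_1])
      (simp add: restrict_eq_restrict_iff)
  also have "\<dots> \<le> \<beta>" using code_repair(1)[of j] assms by simp
  finally show ?thesis .
qed

lemma B_le_H:
  assumes K: "{a, b, c} \<subseteq> {1..4}" "card {a, b, c} = 3"
    and X: "code_determines X {Stored a, Stored b, Stored c}"
  shows "real B \<le> H X"
proof -
  let ?K = "{Stored a, Stored b, Stored c}"
  obtain g where g: "\<forall>m\<in>file_space B. g (\<lambda>i\<in>{a, b, c}. W i m) = m"
    using code_data_collection[OF K] by blast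
  have "inj_on (\<lambda>m. \<lambda>s\<in>?K. symbol_value s m) (file_space B)"
  proof (rule inj_onI)
    fix m m' assume m: "m \<in> file_space B" "m' \<in> file_space B"
      and "(\<lambda>s\<in>?K. symbol_value s m) = (\<lambda>s\<in>?K. symbol_value s m')"
    then have W: "(\<lambda>i\<in>{a, b, c}. W i m) = (\<lambda>i\<in>{a, b, c}. W i m')"
      unfolding restrict_eq_restrict_iff by simp
    have "m = g (\<lambda>i\<in>{a, b, c}. W i m)" using g m(1) by simp
    also have "\<dots> = m'" unfolding W using g m(2) by simp
    finally show "m = m'" .
  qed
  then have "H ?K = log (card (UNIV :: 'a set)) (card (file_space B :: (nat \<Rightarrow> 'a) set))"
    unfolding H_def joint_entropy_def
    by (rule unif_entropy_inj_on[OF finite_file_space file_space_nonempty q_gt_1])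
  also have "\<dots> = B"
    using q_gt_1 by (simp add: card_file_space log_nat_power)
  finally show ?thesis using H_le_if_determines[OF X] by simp
qed

lemma H_repair_closure_le:
  assumes nodes: "distinct [i, j, x, y]" "{i, j, x, y} \<subseteq> {1..4}"
  shows "H (node i \<union> node j \<union> {Helper x j, Helper y j}) \<le> \<alpha> + 2 * \<beta>"
proof -
  let ?X = "{Stored i, Helper x j, Helper y j}"
  have others: "{1..4} - {j} = {i, x, y}" using four_nodes[OF nodes] nodes(1) by auto
  have "code_determines ?X (node i)"
    by (rule determines_trans[OF determines_subset determines_node]) simp
  moreover have "code_determines (?X \<union> node i) {Stored j}"
    by (rule determines_trans[OF determines_subset determines_Stored_by_repair[OF _ others]])
      (use nodes in \<open>auto simp: node_def\<close>)
  ultimately have "code_determines ?X (node i \<union> {Stored j})"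
    by (rule determines_extend)
  moreover have "code_determines (?X \<union> (node i \<union> {Stored j})) (node j)"
    by (rule determines_trans[OF determines_subset determines_node]) simp
  ultimately have "code_determines ?X (node i \<union> {Stored j} \<union> node j)"
    by (rule determines_extend)
  then have "code_determines ?X (?X \<union> (node i \<union> {Stored j} \<union> node j))"
    by (rule determines_Un[OF determines_subset, rotated]) simp
  then have "code_determines ?X (node i \<union> node j \<union> {Helper x j, Helper y j})"
    by (rule determines_trans[OF _ determines_subset]) (auto simp: node_def)
  then have "H (node i \<union> node j \<union> {Helper x j, Helper y j}) \<le> H ?X"
    by (rule H_le_if_determines)
  also have "\<dots> \<le> H {Stored i} + H {Helper x j} + H {Helper y j}"
  proof -
    have "?X = {Stored i} \<union> ({Helper x j} \<union> {Helper y j})" by blast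
    then show ?thesis
      using H_subadditive[of "{Stored i}" "{Helper x j} \<union> {Helper y j}"]
        H_subadditive[of "{Helper x j}" "{Helper y j}"] by simp
  qed
  also have "\<dots> \<le> \<alpha> + 2 * \<beta>"
    using H_Stored_le[of i] H_Helper_le[of x j] H_Helper_le[of y j] nodes by simp
  finally show ?thesis .
qed

lemma B_plus_H_le_submodular:
  assumes "Z \<subseteq> X" "Z \<subseteq> Y" "real B \<le> H (X \<union> Y)"
  shows "B + H Z \<le> H X + H Y"
  using H_submodular[of X Y] H_mono[of Z "X \<inter> Y"] assms by simp

context
  fixes a b c d :: nat
  assumes nodes: "distinct [a, b, c, d]" "{a, b, c, d} \<subseteq> {1..4}"
begin

lemma B_plus_H_node_two_helpers_le:
  "B + H (node a \<union> {Helper c b, Helper b a}) \<le> 2 * \<alpha> + 4 * \<beta>"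
proof -
  let ?X = "node c \<union> node a \<union> {Helper d a, Helper b a}"
  let ?Y = "node a \<union> node b \<union> {Helper c b, Helper d b}"
  have "real B \<le> H (?X \<union> ?Y)"
    by (rule B_le_H[of a b c], use nodes in simp_all) (auto intro: determines_subset simp: node_def)
  then have "B + H (node a \<union> {Helper c b, Helper b a}) \<le> H ?X + H ?Y"
    by (rule B_plus_H_le_submodular[rotated 2]) (auto simp: node_def)
  moreover have "H ?X \<le> \<alpha> + 2 * \<beta>" "H ?Y \<le> \<alpha> + 2 * \<beta>"
    using nodes by (intro H_repair_closure_le; auto)+
  ultimately show ?thesis by linarith
qed

lemma B_plus_H_node_helper_le:
  "B + H (node a \<union> {Helper b a}) \<le> \<alpha> + 2 * \<beta> + H (node a \<union> {Helper c b, Helper b a})"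
proof -
  let ?X = "node d \<union> node a \<union> {Helper c a, Helper b a}"
  let ?Y = "node a \<union> {Helper c b, Helper b a}"
  have others: "{1..4} - {b} = {a, d, c}" using four_nodes[OF nodes] nodes(1) by auto
  have "code_determines (?X \<union> ?Y) {Stored a, Stored d}"
    by (rule determines_subset) (auto simp: node_def)
  moreover have "code_determines (?X \<union> ?Y) {Stored b}"
    by (rule determines_trans[OF determines_subset determines_Stored_by_repair[OF _ others]])
      (use nodes in \<open>auto simp: node_def\<close>)
  ultimately have "code_determines (?X \<union> ?Y) ({Stored a, Stored d} \<union> {Stored b})"
    by (rule determines_Un)
  then have "real B \<le> H (?X \<union> ?Y)"
    by (intro B_le_H[of a d b]) (use nodes in \<open>auto simp: insert_commute\<close>)
  then have "B + H (node a \<union> {Helper b a}) \<le> H ?X + H ?Y"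
    by (rule B_plus_H_le_submodular[rotated 2]) (auto simp: node_def)
  moreover have "H ?X \<le> \<alpha> + 2 * \<beta>"
    using nodes by (intro H_repair_closure_le) auto
  ultimately show ?thesis by linarith
qed

lemma B_plus_H_helper_le:
  "B + H {Helper b a} \<le> \<alpha> + H (node a \<union> {Helper b a}) + H {Helper c d}"
proof -
  let ?X = "node a \<union> {Helper b a}"
  let ?Y = "node b \<union> {Helper c d}"
  have others: "{1..4} - {d} = {a, b, c}" using four_nodes[OF nodes] nodes(1) by auto
  have "code_determines (?X \<union> ?Y) {Stored a, Stored b}"
    by (rule determines_subset) (auto simp: node_def)
  moreover have "code_determines (?X \<union> ?Y) {Stored d}"
    by (rule determines_trans[OF determines_subset determines_Stored_by_repair[OF _ others]])
      (use nodes in \<open>auto simp: node_def\<close>)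
  ultimately have "code_determines (?X \<union> ?Y) ({Stored a, Stored b} \<union> {Stored d})"
    by (rule determines_Un)
  then have "real B \<le> H (?X \<union> ?Y)"
    by (intro B_le_H[of a b d]) (use nodes in \<open>auto simp: insert_commute\<close>)
  then have "B + H {Helper b a} \<le> H ?X + H ?Y"
    by (rule B_plus_H_le_submodular[rotated 2]) (auto simp: node_def)
  moreover have "H ?Y \<le> \<alpha> + H {Helper c d}"
    using H_subadditive[of "node b" "{Helper c d}"] H_node_le[of b] nodes by simp
  ultimately show ?thesis by linarith
qed

lemma three_B_plus_H_helper_le:
  "3 * real B + H {Helper b a} \<le> 4 * \<alpha> + 6 * \<beta> + H {Helper c d}"
  using B_plus_H_node_two_helpers_le B_plus_H_node_helper_le B_plus_H_helper_le by linarith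

end

lemma three_B_le: "3 * real B \<le> 4 * \<alpha> + 6 * \<beta>"
  using three_B_plus_H_helper_le[of 1 2 3 4] three_B_plus_H_helper_le[of 4 3 2 1] by simp

end

theorem mainTheorem5:
  fixes W :: "nat \<Rightarrow> (nat \<Rightarrow> 'a::{finite,field}) \<Rightarrow> 'w"
    and h :: "nat \<Rightarrow> nat set \<Rightarrow> nat \<Rightarrow> 'w \<Rightarrow> 'h"
    and \<alpha> \<beta> :: real and B :: nat
  assumes "exact_repair_code 4 3 3 \<alpha> \<beta> B W h"
    and "3 / 2 * \<beta> < \<alpha>" and "\<alpha> < 3 * \<beta>"
  shows "3 * real B \<le> 4 * \<alpha> + 6 * \<beta>"
  \<comment> \<open>The bounds on \<open>\<alpha>\<close> only delimit the range where this is the active constraint.\<close>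
proof -
  interpret exact_repair_433 W h \<alpha> \<beta> B by (rule exact_repair_433.intro) (rule assms(1))
  show ?thesis by (rule three_B_le)
qed

end
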